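(* Let $(\mathcal{C},\psi)$ be a t-pair with $\mathcal{C}$ nonempty and $b,c\in\{i,d,a\}$. (a) If there is $n\in\mathbb{N}$ such that the set $\{\psi^b(T):T\in\mathcal{C},\psi^c(T)\le n\}$ is infinite, then $\operatorname{typ}(\mathcal{U}^{bc}_{\mathcal{C}\psi})=\epsilon$. (b) If there is no such $n$, then $\mathrm{Dom}(\mathcal{U}^{bc}_{\mathcal{C}\psi})=\{n\in\mathbb{N}:n\ge n_0\}$, where $n_0=\min\{\psi^c(T):T\in\mathcal{C}\}$.
   Context: Let $\mathbb{N}=\{0,1,2,\dots\}$; for an integer $k\ge 2$ let $E_k=\{0,1,\dots,k-1\}$; let $\mathcal{P}(\mathbb{N})$ be the set of nonempty finite subsets of $\mathbb{N}$. Let $F$ be a nonempty set (of attribute names). A decision table $T\in\mathcal{M}_k(F)$ is a rectangular table with $n\ge 1$ columns labeled with attributes $f_1,\dots,f_n\in F$ (any two columns labeled with the same attribute are equal), whose rows are pairwise different tuples from $E_k^n$ (the set of rows may be empty), each row being labeled with a set of decisions from $\mathcal{P}(\mathbb{N})$. Write $At(T)=\{f_1,\dots,f_n\}$ and $\Delta(T)$ for the set of rows. For a word $\alpha=(f_{i_1},\delta_1)\cdots(f_{i_m},\delta_m)$ with $f_{i_j}\in At(T)$, $\delta_j\in E_k$, the subtable $T\alpha$ consists of the rows of $T$ having value $\delta_j$ in column $f_{i_j}$ for all $j$ ($T\lambda=T$ for the empty word $\lambda$). Operations on tables: (1) removal of a column from a table with at least two columns (if groups of equal rows appear, only the first row of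 each group, with its decision set, is kept); (2) changing of decisions: the decision sets attached to rows are replaced arbitrarily by sets from $\mathcal{P}(\mathbb{N})$; (3) permutation of columns: swap two columns together with their attribute labels; (4) duplication of columns: add a copy of a column (with its label) next to it. A set $\mathcal{C}\subseteq\mathcal{M}_k(F)$ is a closed class if every table obtained from a table of $\mathcal{C}$ by finitely many such operations belongs to $\mathcal{C}$. A decision tree over $\mathcal{M}_k(F)$ is a finite directed tree with a root (unique node with no entering edge) and at least two nodes such that the root and the edges leaving the root are unlabeled, each worker node (neither root nor terminal) is labeled with an attribute from $F$, each edge leaving a worker node is labeled with a number from $E_k$, and each terminal node is labeled with a number from $\mathbb{N}$. For a complete path $\xi$ (root to terminal node) whose worker nodes are labeled $f_{j_1},\dots,f_{j_m}$ in order, with the edges leaving them labeled $\delta_1,\dots,\delta_m$, put $\pi(\xi)=(f_{j_1},\delta_1)\cdots(f_{j_m},\delta_m)$, $\varphi(\xi)=f_{j_1}\cdots f_{j_m}$ (both empty if $m=0$), and let $\tau(\xi)$ be the label of its terminal node. A nondeterministic decision tree for $T$ is a decision tree $\Gamma$ whose worker-node attributes lie in $At(T)$, such that $\bigcup_{\xi}\Delta(T\pi(\xi))=\Delta(T)$ (union over complete paths), and for every row $r\in\Delta(T)$ and every complete path $\xi$ with $r\in\Delta(T\pi(\xi))$, $\tau(\xi)$ belongs to the decision set of $r$. A decision tree is deterministic if exactly one edge leaves the root and the edges leaving each worker node have pairwise different labels; a deterministic decision tree for $T$ is a deterministic decision tree that is a nondeterministic decision tree for $T$. A complexity measure over $\mathcal{M}_k(F)$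 is any map $\psi:F^*\to\mathbb{N}$, where $F^*$ is the set of finite words over $F$ including the empty word $\lambda$. For a tree, $\psi(\Gamma)=\max_\xi\psi(\varphi(\xi))$ over complete paths. For $T$ with columns labeled $f_1,\dots,f_n$: $\psi^i(T)=\psi(f_1\cdots f_n)$, $\psi^d(T)$ is the minimum complexity of a deterministic decision tree for $T$, $\psi^a(T)$ the minimum complexity of a nondeterministic decision tree for $T$. A t-pair $(\mathcal{C},\psi)$ consists of a closed class $\mathcal{C}\subseteq\mathcal{M}_k(F)$ and a complexity measure $\psi$ over $\mathcal{M}_k(F)$. For $b,c\in\{i,d,a\}$ define the partial function $\mathcal{U}^{bc}_{\mathcal{C}\psi}(n)=\max\{\psi^b(T):T\in\mathcal{C},\psi^c(T)\le n\}$ (defined iff this set is nonempty and finite). For a partial function $g:\mathbb{N}\to\mathbb{N}$ with domain $\mathrm{Dom}(g)$, let $\mathrm{Dom}^+(g)=\{n\in\mathrm{Dom}(g):g(n)\ge n\}$, $\mathrm{Dom}^-(g)=\{n\in\mathrm{Dom}(g):g(n)\le n\}$. Its type $\operatorname{typ}(g)$ is: $\alpha$ if $\mathrm{Dom}(g)$ is infinite and $g$ is bounded above; $\beta$ if $\mathrm{Dom}(g)$ is infinite, $\mathrm{Dom}^+(g)$ is finite and $g$ is unbounded above; $\gamma$ if $\mathrm{Dom}^+(g)$ and $\mathrm{Dom}^-(g)$ are both infinite; $\delta$ if $\mathrm{Dom}(g)$ is infinite and $\mathrm{Dom}^-(g)$ is finite; $\epsilon$ if $\mathrm{Dom}(g)$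 is finite. *)

theory Defs
  imports Main
begin

(* A decision table over attribute type 'f: a list of column labels f_1..f_n and an
  (ordered) list of rows, each row being a tuple of numbers (a nat list of length n) paired
  with its decision set.  The attribute set F is the universe of the type 'f. *)
type_synonym 'f table = "'f list \<times> (nat list \<times> nat set) list"

definition At :: "'f table \<Rightarrow> 'f set" where
  "At T = set (fst T)"

definition Rows :: "'f table \<Rightarrow> nat list set" where
  "Rows T = set (map fst (snd T))"

definition wf_table :: "nat \<Rightarrow> 'f table \<Rightarrow> bool" where
  "wf_table k T \<longleftrightarrow>
     (let cs = fst T; rs = snd T in
        length cs \<ge> 1
      \<and> distinct (map fst rs)
      \<and> (\<forall>(r, D) \<in> set rs. length r = length cs \<and> (\<forall>x \<in> set r. x < k) \<and> D \<noteq> {} \<and> finite D)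
      \<and> (\<forall>i < length cs. \<forall>j < length cs. cs ! i = cs ! j \<longrightarrow> (\<forall>(r, D) \<in> set rs. r ! i = r ! j)))"

definition remove_nth :: "nat \<Rightarrow> 'a list \<Rightarrow> 'a list" where
  "remove_nth i xs = take i xs @ drop (Suc i) xs"

definition dup_nth :: "nat \<Rightarrow> 'a list \<Rightarrow> 'a list" where
  "dup_nth i xs = take (Suc i) xs @ [xs ! i] @ drop (Suc i) xs"

definition swap_nth :: "nat \<Rightarrow> nat \<Rightarrow> 'a list \<Rightarrow> 'a list" where
  "swap_nth i j xs = xs[i := xs ! j, j := xs ! i]"

fun keep_first :: "('a \<times> 'b) list \<Rightarrow> ('a \<times> 'b) list" where
  "keep_first [] = []"
| "keep_first ((a, D) # xs) = (a, D) # keep_first (filter (\<lambda>p. fst p \<noteq> a) xs)"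

definition remove_col :: "nat \<Rightarrow> 'f table \<Rightarrow> 'f table" where
  "remove_col i T = (remove_nth i (fst T), keep_first (map (\<lambda>(r, D). (remove_nth i r, D)) (snd T)))"

definition swap_cols :: "nat \<Rightarrow> nat \<Rightarrow> 'f table \<Rightarrow> 'f table" where
  "swap_cols i j T = (swap_nth i j (fst T), map (\<lambda>(r, D). (swap_nth i j r, D)) (snd T))"

definition dup_col :: "nat \<Rightarrow> 'f table \<Rightarrow> 'f table" where
  "dup_col i T = (dup_nth i (fst T), map (\<lambda>(r, D). (dup_nth i r, D)) (snd T))"

definition op_step :: "'f table \<Rightarrow> 'f table \<Rightarrow> bool" where
  "op_step T T' \<longleftrightarrow>
     (let n = length (fst T) in
        (n \<ge> 2 \<and> (\<exists>i < n. T' = remove_col i T))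
      \<or> (\<exists>Ds. length Ds = length (snd T) \<and> (\<forall>D \<in> set Ds. D \<noteq> {} \<and> finite D)
              \<and> T' = (fst T, zip (map fst (snd T)) Ds))
      \<or> (\<exists>i < n. \<exists>j < n. T' = swap_cols i j T)
      \<or> (\<exists>i < n. T' = dup_col i T))"

definition closed_class :: "nat \<Rightarrow> 'f table set \<Rightarrow> bool" where
  "closed_class k C \<longleftrightarrow>
     C \<subseteq> {T. wf_table k T} \<and> (\<forall>T \<in> C. \<forall>T'. op_step\<^sup>*\<^sup>* T T' \<longrightarrow> T' \<in> C)"

definition sat_pair :: "'f list \<Rightarrow> nat list \<Rightarrow> 'f \<times> nat \<Rightarrow> bool" where
  "sat_pair cs r p \<longleftrightarrow> (\<exists>i < length cs. cs ! i = fst p \<and> r ! i = snd p)"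

definition sub_rows :: "'f table \<Rightarrow> ('f \<times> nat) list \<Rightarrow> nat list set" where
  "sub_rows T \<alpha> = {r \<in> Rows T. \<forall>p \<in> set \<alpha>. sat_pair (fst T) r p}"

(* A decision tree is the
  (unlabelled) root together with the list of its children. *)
datatype 'f dnode = Term nat | Work 'f "(nat \<times> 'f dnode) list"

type_synonym 'f dtree = "'f dnode list"

inductive all_workers :: "('f \<Rightarrow> (nat \<times> 'f dnode) list \<Rightarrow> bool) \<Rightarrow> 'f dnode \<Rightarrow> bool"
  for Q where
  "all_workers Q (Term d)"
| "Q f es \<Longrightarrow> (\<forall>e \<in> set es. all_workers Q (snd e)) \<Longrightarrow> all_workers Q (Work f es)"

inductive path :: "'f dnode \<Rightarrow> ('f \<times> nat) list \<Rightarrow> nat \<Rightarrow> bool" where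
  "path (Term d) [] d"
| "(\<delta>, t) \<in> set es \<Longrightarrow> path t p d \<Longrightarrow> path (Work f es) ((f, \<delta>) # p) d"

definition cpath :: "'f dtree \<Rightarrow> ('f \<times> nat) list \<Rightarrow> nat \<Rightarrow> bool" where
  "cpath \<Gamma> p d \<longleftrightarrow> (\<exists>t \<in> set \<Gamma>. path t p d)"

(* Decision tree over M_k(F): the root has at least one child (at least two nodes),
  worker nodes have at least one outgoing edge (they are not terminal), edge labels lie in E_k. *)
definition dtree_ok :: "nat \<Rightarrow> 'f dtree \<Rightarrow> bool" where
  "dtree_ok k \<Gamma> \<longleftrightarrow> \<Gamma> \<noteq> [] \<and>
     (\<forall>t \<in> set \<Gamma>. all_workers (\<lambda>f es. es \<noteq> [] \<and> (\<forall>e \<in> set es. fst e < k)) t)"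

definition deterministic :: "'f dtree \<Rightarrow> bool" where
  "deterministic \<Gamma> \<longleftrightarrow> length \<Gamma> = 1 \<and>
     (\<forall>t \<in> set \<Gamma>. all_workers (\<lambda>f es. distinct (map fst es)) t)"

definition nondet_tree_for :: "nat \<Rightarrow> 'f table \<Rightarrow> 'f dtree \<Rightarrow> bool" where
  "nondet_tree_for k T \<Gamma> \<longleftrightarrow>
     dtree_ok k \<Gamma>
   \<and> (\<forall>t \<in> set \<Gamma>. all_workers (\<lambda>f es. f \<in> At T) t)
   \<and> (\<Union>{sub_rows T p | p d. cpath \<Gamma> p d}) = Rows T
   \<and> (\<forall>(r, D) \<in> set (snd T). \<forall>p d. cpath \<Gamma> p d \<and> r \<in> sub_rows T p \<longrightarrow> d \<in> D)"

definition det_tree_for :: "nat \<Rightarrow> 'f table \<Rightarrow> 'f dtree \<Rightarrow> bool" where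
  "det_tree_for k T \<Gamma> \<longleftrightarrow> deterministic \<Gamma> \<and> nondet_tree_for k T \<Gamma>"

definition tree_cplx :: "('f list \<Rightarrow> nat) \<Rightarrow> 'f dtree \<Rightarrow> nat" where
  "tree_cplx \<psi> \<Gamma> = Max {\<psi> (map fst p) | p d. cpath \<Gamma> p d}"

datatype cplx_kind = I | D | A

definition psi_of :: "nat \<Rightarrow> ('f list \<Rightarrow> nat) \<Rightarrow> cplx_kind \<Rightarrow> 'f table \<Rightarrow> nat" where
  "psi_of k \<psi> b T = (case b of
       I \<Rightarrow> \<psi> (fst T)
     | D \<Rightarrow> Inf {tree_cplx \<psi> \<Gamma> | \<Gamma>. det_tree_for k T \<Gamma>}
     | A \<Rightarrow> Inf {tree_cplx \<psi> \<Gamma> | \<Gamma>. nondet_tree_for k T \<Gamma>})"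

definition U_set :: "nat \<Rightarrow> ('f list \<Rightarrow> nat) \<Rightarrow> 'f table set \<Rightarrow> cplx_kind \<Rightarrow> cplx_kind \<Rightarrow> nat \<Rightarrow> nat set" where
  "U_set k \<psi> C b c n = {psi_of k \<psi> b T | T. T \<in> C \<and> psi_of k \<psi> c T \<le> n}"

definition U_fun :: "nat \<Rightarrow> ('f list \<Rightarrow> nat) \<Rightarrow> 'f table set \<Rightarrow> cplx_kind \<Rightarrow> cplx_kind \<Rightarrow> nat \<Rightarrow> nat option" where
  "U_fun k \<psi> C b c n =
     (if U_set k \<psi> C b c n \<noteq> {} \<and> finite (U_set k \<psi> C b c n)
      then Some (Max (U_set k \<psi> C b c n)) else None)"

definition dom_plus :: "(nat \<Rightarrow> nat option) \<Rightarrow> nat set" where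
  "dom_plus g = {n \<in> dom g. the (g n) \<ge> n}"

definition dom_minus :: "(nat \<Rightarrow> nat option) \<Rightarrow> nat set" where
  "dom_minus g = {n \<in> dom g. the (g n) \<le> n}"

definition bounded_above :: "(nat \<Rightarrow> nat option) \<Rightarrow> bool" where
  "bounded_above g \<longleftrightarrow> (\<exists>M. \<forall>n \<in> dom g. the (g n) \<le> M)"

datatype ftype = Alpha | Beta | Gamma | Delta | Epsilon

definition has_typ :: "(nat \<Rightarrow> nat option) \<Rightarrow> ftype \<Rightarrow> bool" where
  "has_typ g t = (case t of
       Alpha \<Rightarrow> infinite (dom g) \<and> bounded_above g
     | Beta \<Rightarrow> infinite (dom g) \<and> finite (dom_plus g) \<and> \<not> bounded_above g
     | Gamma \<Rightarrow> infinite (dom_plus g) \<and> infinite (dom_minus g)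
     | Delta \<Rightarrow> infinite (dom g) \<and> finite (dom_minus g)
     | Epsilon \<Rightarrow> finite (dom g))"

definition ftyp :: "(nat \<Rightarrow> nat option) \<Rightarrow> ftype" where
  "ftyp g = (THE t. has_typ g t)"

end

theory Submission
  imports Defs
begin

text \<open>Both parts only use that \<open>U_set k \<psi> C b c n\<close> grows with \<open>n\<close>: once it is infinite it stays
  infinite, so the domain of \<open>U_fun\<close> is bounded; if it is always finite, \<open>n\<close> lies in the domain
  exactly when some table of \<open>C\<close> has \<open>c\<close>-complexity at most \<open>n\<close>.\<close>

lemma ftyp_eq_Epsilon_if_finite_dom:
  assumes "finite (dom g)"
  shows "ftyp g = Epsilon"
proof -
  have "finite (dom_plus g)"
    using assms unfolding dom_plus_def by (auto intro: finite_subset)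
  with assms have "has_typ g t \<longleftrightarrow> t = Epsilon" for t
    by (cases t) (auto simp: has_typ_def)
  then show ?thesis
    unfolding ftyp_def by auto
qed

lemma U_set_mono: "n \<le> m \<Longrightarrow> U_set k \<psi> C b c n \<subseteq> U_set k \<psi> C b c m"
  unfolding U_set_def by force

lemma in_dom_U_fun_iff:
  "n \<in> dom (U_fun k \<psi> C b c) \<longleftrightarrow> U_set k \<psi> C b c n \<noteq> {} \<and> finite (U_set k \<psi> C b c n)"
  by (auto simp: U_fun_def split: if_splits)

lemma dom_U_fun_subset_if_infinite_U_set:
  assumes "infinite (U_set k \<psi> C b c n)"
  shows "dom (U_fun k \<psi> C b c) \<subseteq> {..<n}"
proof
  fix m
  assume "m \<in> dom (U_fun k \<psi> C b c)"
  then have "finite (U_set k \<psi> C b c m)"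
    by (simp add: in_dom_U_fun_iff)
  with assms have "\<not> U_set k \<psi> C b c n \<subseteq> U_set k \<psi> C b c m"
    using finite_subset by blast
  then show "m \<in> {..<n}"
    using U_set_mono[of n m] by fastforce
qed

lemma U_set_nonempty_iff:
  assumes "C \<noteq> {}"
  shows "U_set k \<psi> C b c n \<noteq> {} \<longleftrightarrow> Inf {psi_of k \<psi> c T | T. T \<in> C} \<le> n"
    (is "_ \<longleftrightarrow> Inf ?S \<le> n")
proof
  assume "U_set k \<psi> C b c n \<noteq> {}"
  then obtain T where "T \<in> C" "psi_of k \<psi> c T \<le> n"
    by (auto simp: U_set_def)
  moreover from \<open>T \<in> C\<close> have "Inf ?S \<le> psi_of k \<psi> c T"
    by (intro cInf_lower) blast+
  ultimately show "Inf ?S \<le> n"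
    by simp
next
  assume "Inf ?S \<le> n"
  from assms have "Inf ?S \<in> ?S"
    by (intro Inf_nat_def1) blast
  then obtain T where "T \<in> C" "psi_of k \<psi> c T = Inf ?S"
    by auto
  with \<open>Inf ?S \<le> n\<close> have "psi_of k \<psi> c T \<le> n"
    by simp
  with \<open>T \<in> C\<close> have "psi_of k \<psi> b T \<in> U_set k \<psi> C b c n"
    unfolding U_set_def by blast
  then show "U_set k \<psi> C b c n \<noteq> {}"
    by blast
qed

theorem lemma2:
  fixes k :: nat and C :: "'f table set" and \<psi> :: "'f list \<Rightarrow> nat" and b c :: cplx_kind
  assumes "k \<ge> 2" and "closed_class k C" and "C \<noteq> {}"
  shows "((\<exists>n. infinite (U_set k \<psi> C b c n)) \<longrightarrow> ftyp (U_fun k \<psi> C b c) = Epsilon)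
       \<and> ((\<not> (\<exists>n. infinite (U_set k \<psi> C b c n))) \<longrightarrow>
            dom (U_fun k \<psi> C b c) = {n. n \<ge> Inf {psi_of k \<psi> c T | T. T \<in> C}})"
proof (intro conjI impI)
  assume "\<exists>n. infinite (U_set k \<psi> C b c n)"
  then obtain n where "infinite (U_set k \<psi> C b c n)"
    by blast
  then have "finite (dom (U_fun k \<psi> C b c))"
    by (rule finite_subset[OF dom_U_fun_subset_if_infinite_U_set]) simp
  then show "ftyp (U_fun k \<psi> C b c) = Epsilon"
    by (rule ftyp_eq_Epsilon_if_finite_dom)
next
  assume "\<not> (\<exists>n. infinite (U_set k \<psi> C b c n))"
  then have "n \<in> dom (U_fun k \<psi> C b c) \<longleftrightarrow> U_set k \<psi> C b c n \<noteq> {}" for n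
    by (simp add: in_dom_U_fun_iff)
  then show "dom (U_fun k \<psi> C b c) = {n. n \<ge> Inf {psi_of k \<psi> c T | T. T \<in> C}}"
    using U_set_nonempty_iff[OF \<open>C \<noteq> {}\<close>] by blast
qed

end
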